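(* There exist constants $A,B>0$ such that for all $k\in\mathbb{N}$ and all $a\geq1$, $\mathbf{T}^{(\infty,a-)}_{k+1}\leq A\rho_\infty^k\exp(-Bk/a)$.
   Context: $\mathbf{T}^{(\infty,a-)}_{n}$ denotes the number of rooted unordered trees with $n$ vertices (no constraint on degrees) all of whose subtrees rooted at the children of the root have at most $a$ vertices. By Otter's theorem, the number of rooted unordered trees with $n$ vertices is asymptotic to $\kappa_\infty\rho_\infty^nn^{-3/2}$ for constants $\kappa_\infty>0$, $\rho_\infty>1$. *)

theory Defs
  imports "HOL-Analysis.Analysis" "HOL-Library.Multiset" "HOL-Library.Landau_Symbols"
begin

text \<open>Rooted unordered trees: a root together with a multiset of subtrees
  (the subtrees rooted at the children of the root).\<close>
datatype rtree = Node (children: "rtree multiset")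

primrec nverts :: "rtree \<Rightarrow> nat" where
  "nverts (Node ts) = 1 + sum_mset (image_mset nverts ts)"

definition T_inf :: "nat \<Rightarrow> nat" where
  "T_inf n = card {t. nverts t = n}"

definition T_inf_le :: "nat \<Rightarrow> nat \<Rightarrow> nat" where
  "T_inf_le a n = card {t. nverts t = n \<and> (\<forall>c\<in>#children t. nverts c \<le> a)}"

end

theory Submission
  imports Defs
begin

text \<open>Weight trees by \<open>x = e\<^bsup>\<delta>/a\<^esup>/\<rho>\<close> with \<open>\<delta> = (ln \<rho>)/2\<close>, so that \<open>x \<le> e\<^sup>\<delta>/\<rho> < 1\<close>.
  A tree counted by \<open>T_inf_le a (k+1)\<close> is a multiset of trees with at most \<open>a\<close> vertices
  and total weight \<open>x\<^sup>k\<close>, so \<open>T_inf_le a (k+1) x\<^sup>k\<close> is bounded by the Euler product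
  \<open>\<Prod>\<^sub>t 1/(1 - x\<^bsup>|t|\<^esup>) \<le> exp (\<Sum>\<^sub>j\<^sub>\<le>\<^sub>a T\<^sub>j x\<^sup>j / (1 - x))\<close> over trees \<open>t\<close> with at most \<open>a\<close> vertices.
  Otter's estimate gives \<open>T\<^sub>j x\<^sup>j \<le> C e\<^sup>\<delta> j\<^bsup>-3/2\<^esup>\<close> for \<open>j \<le> a\<close>, so the exponent is bounded
  uniformly in \<open>a\<close> and \<open>k\<close>; dividing by \<open>x\<^sup>k = \<rho>\<^bsup>-k\<^esup> e\<^bsup>\<delta>k/a\<^esup>\<close> gives the claim.\<close>

lemma prod_mset_image_power:
  "prod_mset (image_mset (\<lambda>t. x ^ f t) M) = (x :: 'a :: comm_monoid_mult) ^ sum_mset (image_mset f M)"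
  by (induction M) (simp_all add: power_add)

lemma nverts_pos: "nverts t \<ge> 1"
  by (cases t) auto

lemma nverts_children: "nverts t = 1 + sum_mset (image_mset nverts (children t))"
  by (cases t) simp

lemma size_le_sum_nverts: "size M \<le> sum_mset (image_mset nverts M)"
  by (induction M) (simp_all add: add_mono[OF nverts_pos, simplified])

lemma nverts_le_sum_nverts: "c \<in># M \<Longrightarrow> nverts c \<le> sum_mset (image_mset nverts M)"
  by (metis image_mset_add_mset le_add1 multi_member_split sum_mset.insert)

lemma finite_trees_nverts_le: "finite {t. nverts t \<le> n}"
proof (induction n)
  case 0
  have "nverts t \<noteq> 0" for t
    using nverts_pos[of t] by simp
  then have "{t. nverts t \<le> 0} = {}" by simp
  then show ?case by (simp only: finite.emptyI)
next
  case (Suc n)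
  have "{t. nverts t \<le> Suc n} \<subseteq> Node ` (\<Union>m\<le>n. multisets_of_size {t. nverts t \<le> n} m)"
  proof
    fix t assume "t \<in> {t. nverts t \<le> Suc n}"
    then obtain M where t: "t = Node M" and w: "sum_mset (image_mset nverts M) \<le> n"
      by (cases t) auto
    have "M \<in> multisets_of_size {t. nverts t \<le> n} (size M)" "size M \<le> n"
      unfolding multisets_of_size_def
      using w nverts_le_sum_nverts[of _ M] size_le_sum_nverts[of M] by force+
    then show "t \<in> Node ` (\<Union>m\<le>n. multisets_of_size {t. nverts t \<le> n} m)"
      using t by blast
  qed
  then show ?case using Suc.IH finite_subset by blast
qed

lemma finite_trees_nverts_eq: "finite {t. nverts t = n}"
  by (rule finite_subset[OF _ finite_trees_nverts_le[of n]]) auto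

lemma sum_trees_nverts_le_pow:
  "(\<Sum>t\<in>{t. nverts t \<le> a}. x ^ nverts t) = (\<Sum>j=1..a. real (T_inf j) * (x::real) ^ j)"
proof -
  have "{t. nverts t \<le> a} = (\<Union>j\<in>{1..a}. {t. nverts t = j})"
    using nverts_pos by auto
  then have "(\<Sum>t\<in>{t. nverts t \<le> a}. x ^ nverts t) = (\<Sum>j=1..a. \<Sum>t\<in>{t. nverts t = j}. x ^ nverts t)"
    by (simp only:) (rule sum.UNION_disjoint, auto simp: finite_trees_nverts_eq)
  also have "\<dots> = (\<Sum>j=1..a. real (T_inf j) * x ^ j)"
    by (rule sum.cong) (auto simp: T_inf_def)
  finally show ?thesis .
qed

text \<open>The multiplicity vector \<open>count M\<close> identifies \<open>M\<close>, and the products of geometric sums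
  expand into a sum over all multiplicity vectors bounded by \<open>K\<close>.\<close>
lemma sum_prod_mset_le_prod_geometric_sums:
  fixes y :: "'a \<Rightarrow> real"
  assumes "finite U" and "\<And>u. u \<in> U \<Longrightarrow> 0 \<le> y u"
    and "\<And>M. M \<in> S \<Longrightarrow> set_mset M \<subseteq> U \<and> size M \<le> K"
  shows "(\<Sum>M\<in>S. prod_mset (image_mset y M)) \<le> (\<Prod>u\<in>U. \<Sum>i\<le>K. y u ^ i)"
proof -
  define mult where "mult M = restrict (count M) U" for M :: "'a multiset"
  have inj: "inj_on mult S"
  proof (rule inj_onI)
    fix M N assume "M \<in> S" "N \<in> S" "mult M = mult N"
    then have "count M u = count N u" for u
      using assms(3) unfolding mult_def restrict_def
      by (metis count_eq_zero_iff subsetD)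
    then show "M = N" by (simp add: multiset_eqI)
  qed
  have img: "mult ` S \<subseteq> PiE U (\<lambda>_. {..K})"
    using assms(3) by (auto simp: mult_def) (metis count_le_size order_trans)
  have prod_eq: "prod_mset (image_mset y M) = (\<Prod>u\<in>U. y u ^ mult M u)" if "M \<in> S" for M
  proof -
    have "prod_mset (image_mset y M) = (\<Prod>u\<in>set_mset M. y u ^ count M u)"
      by (rule image_prod_mset_multiplicity)
    also have "\<dots> = (\<Prod>u\<in>U. y u ^ count M u)"
      using assms(1) assms(3)[OF that] by (intro prod.mono_neutral_left) (auto simp: not_in_iff)
    finally show ?thesis by (simp add: mult_def)
  qed
  have "(\<Sum>M\<in>S. prod_mset (image_mset y M)) = (\<Sum>g\<in>mult ` S. \<Prod>u\<in>U. y u ^ g u)"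
    by (simp add: sum.reindex[OF inj] prod_eq)
  also have "\<dots> \<le> (\<Sum>g\<in>PiE U (\<lambda>_. {..K}). \<Prod>u\<in>U. y u ^ g u)"
    using img assms(1,2) by (intro sum_mono2 finite_PiE prod_nonneg zero_le_power) auto
  also have "\<dots> = (\<Prod>u\<in>U. \<Sum>i\<le>K. y u ^ i)"
    using assms(1) by (simp add: prod_sum_PiE)
  finally show ?thesis .
qed

lemma geometric_sum_le_exp:
  fixes y q :: real
  assumes "0 \<le> y" "y \<le> q" "q < 1"
  shows "(\<Sum>i\<le>K. y ^ i) \<le> exp (y / (1 - q))"
proof -
  have "(\<Sum>i\<le>K. y ^ i) = (1 - y ^ Suc K) / (1 - y)"
    using sum_gp_strict[of y "Suc K"] assms by (simp add: lessThan_Suc_atMost)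
  also have "\<dots> \<le> 1 / (1 - y)"
    using assms by (simp add: divide_right_mono)
  also have "\<dots> = 1 + y / (1 - y)"
    using assms by (simp add: field_simps)
  also have "\<dots> \<le> exp (y / (1 - y))"
    by (rule exp_ge_add_one_self)
  also have "\<dots> \<le> exp (y / (1 - q))"
    using assms by (simp add: frac_le)
  finally show ?thesis .
qed

lemma T_inf_le_mult_pow_le_exp:
  fixes x :: real
  assumes "0 \<le> x" "x < 1"
  shows "real (T_inf_le a (k + 1)) * x ^ k \<le> exp ((\<Sum>j=1..a. real (T_inf j) * x ^ j) / (1 - x))"
proof -
  define X where "X = {t. nverts t = k + 1 \<and> (\<forall>c\<in>#children t. nverts c \<le> a)}"
  define U where "U = {t. nverts t \<le> a}"
  have children_X: "sum_mset (image_mset nverts M) = k" "set_mset M \<subseteq> U" "size M \<le> k"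
    if "M \<in> children ` X" for M
    using that nverts_children size_le_sum_nverts[of M] unfolding X_def U_def by auto
  have pow_le: "x ^ nverts t \<le> x" for t
    using assms nverts_pos[of t] by (simp add: power_le_one power_decreasing[of 1, simplified])
  have "real (T_inf_le a (k + 1)) * x ^ k = real (card (children ` X)) * x ^ k"
    unfolding T_inf_le_def X_def[symmetric]
    by (subst card_image) (auto intro: inj_onI simp: rtree.expand)
  also have "\<dots> = (\<Sum>M\<in>children ` X. prod_mset (image_mset (\<lambda>t. x ^ nverts t) M))"
    using children_X by (simp add: prod_mset_image_power)
  also have "\<dots> \<le> (\<Prod>t\<in>U. \<Sum>i\<le>k. (x ^ nverts t) ^ i)"
    using children_X assms
    by (intro sum_prod_mset_le_prod_geometric_sums) (auto simp: U_def finite_trees_nverts_le)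
  also have "\<dots> \<le> (\<Prod>t\<in>U. exp (x ^ nverts t / (1 - x)))"
    using pow_le assms by (intro prod_mono conjI sum_nonneg geometric_sum_le_exp) auto
  also have "\<dots> = exp ((\<Sum>t\<in>U. x ^ nverts t) / (1 - x))"
    by (simp add: U_def exp_sum finite_trees_nverts_le sum_divide_distrib)
  finally show ?thesis
    by (simp add: U_def sum_trees_nverts_le_pow)
qed

lemma bigo_imp_le_const_mult:
  fixes f g :: "nat \<Rightarrow> real"
  assumes "f \<in> O(g)" and g_pos: "\<And>n. n \<ge> 1 \<Longrightarrow> g n > 0"
  shows "\<exists>C>0. \<forall>n\<ge>1. f n \<le> C * g n"
proof -
  obtain c N where c: "c > 0" and N: "\<And>n. n \<ge> N \<Longrightarrow> \<bar>f n\<bar> \<le> c * \<bar>g n\<bar>"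
    using assms(1) by (elim landau_o.bigE) (auto simp: eventually_at_top_linorder)
  define C where "C = c + (\<Sum>n=1..N. \<bar>f n\<bar> / g n)"
  have initial_nonneg: "0 \<le> (\<Sum>n=1..N. \<bar>f n\<bar> / g n)"
    using g_pos by (intro sum_nonneg divide_nonneg_pos) auto
  have "f n \<le> C * g n" if "n \<ge> 1" for n
  proof (cases "n \<ge> N")
    case True
    then have "f n \<le> c * g n" using N g_pos[OF that] by fastforce
    also have "\<dots> \<le> C * g n"
      using g_pos[OF that] initial_nonneg by (intro mult_right_mono) (auto simp: C_def)
    finally show ?thesis .
  next
    case False
    have "\<bar>f n\<bar> / g n \<le> (\<Sum>n=1..N. \<bar>f n\<bar> / g n)"
      using that False g_pos by (intro member_le_sum divide_nonneg_pos) auto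
    also have "\<dots> \<le> C" using c by (simp add: C_def)
    finally show ?thesis using g_pos[OF that] by (simp add: divide_le_eq)
  qed
  moreover have "C > 0" using c initial_nonneg by (simp add: C_def)
  ultimately show ?thesis by blast
qed

text \<open>Twisting by \<open>x = e\<^bsup>\<delta>/a\<^esup>/\<rho>\<close> cancels the exponential growth \<open>\<rho>\<^sup>j\<close>, and for
  \<open>j \<le> a\<close> the twist \<open>e\<^bsup>\<delta>j/a\<^esup>\<close> stays below \<open>e\<^sup>\<delta>\<close>.\<close>
lemma sum_twisted_le_suminf_powr:
  fixes f :: "nat \<Rightarrow> real" and \<rho> \<delta> C p :: real
  assumes "\<rho> > 0" "\<delta> \<ge> 0" "C \<ge> 0" "p < -1"
    and f_le: "\<And>j. j \<ge> 1 \<Longrightarrow> f j \<le> C * \<rho> ^ j * real j powr p"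
  shows "(\<Sum>j=1..a. f j * (exp (\<delta> / real a) / \<rho>) ^ j) \<le> C * exp \<delta> * (\<Sum>n. real n powr p)"
proof -
  have "f j * (exp (\<delta> / real a) / \<rho>) ^ j \<le> C * exp \<delta> * real j powr p" if "j \<in> {1..a}" for j
  proof -
    have "\<delta> * real j / real a \<le> \<delta>"
      using that assms(2) by (simp add: divide_le_eq mult_left_mono)
    then have twist: "(exp (\<delta> / real a) / \<rho>) ^ j \<le> exp \<delta> / \<rho> ^ j"
      using assms(1) by (simp add: power_divide exp_of_nat_mult[symmetric] mult.commute divide_right_mono)
    have "f j * (exp (\<delta> / real a) / \<rho>) ^ j \<le> C * \<rho> ^ j * real j powr p * (exp \<delta> / \<rho> ^ j)"
      using f_le[of j] that twist assms(1,3) by (intro mult_mono) auto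
    also have "\<dots> = C * exp \<delta> * real j powr p"
      using assms(1) by simp
    finally show ?thesis .
  qed
  then have "(\<Sum>j=1..a. f j * (exp (\<delta> / real a) / \<rho>) ^ j) \<le> C * exp \<delta> * (\<Sum>j=1..a. real j powr p)"
    unfolding sum_distrib_left by (rule sum_mono)
  also have "\<dots> \<le> C * exp \<delta> * (\<Sum>n. real n powr p)"
    using assms(3,4) by (intro mult_left_mono sum_le_suminf) (auto simp: summable_real_powr_iff)
  finally show ?thesis .
qed

theorem lemma26:
  fixes \<kappa> \<rho> :: real
  assumes "\<kappa> > 0" and "\<rho> > 1"
    and "(\<lambda>n. real (T_inf n)) \<sim>[at_top] (\<lambda>n. \<kappa> * \<rho> ^ n * real n powr (-3/2))"
  shows "\<exists>A B :: real. A > 0 \<and> B > 0 \<and>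
    (\<forall>k a :: nat. a \<ge> 1 \<longrightarrow>
       real (T_inf_le a (k + 1)) \<le> A * \<rho> ^ k * exp (- B * real k / real a))"
proof -
  obtain C where "C > 0" and C: "\<And>n. n \<ge> 1 \<Longrightarrow> real (T_inf n) \<le> C * (\<kappa> * \<rho> ^ n * real n powr (-3/2))"
    using bigo_imp_le_const_mult[OF asymp_equiv_imp_bigo[OF assms(3)]] assms(1,2) by auto
  define \<delta> where "\<delta> = ln \<rho> / 2"
  define q where "q = exp \<delta> / \<rho>"
  define D where "D = C * \<kappa> * exp \<delta> * (\<Sum>n. real n powr (-3/2)) / (1 - q)"
  have "\<delta> > 0" "\<delta> < ln \<rho>"
    using assms(2) by (simp_all add: \<delta>_def)
  then have "q < 1"
    using assms(2) by (simp add: q_def exp_less_cancel_iff[symmetric, of \<delta> "ln \<rho>"])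
  show ?thesis
  proof (intro exI conjI allI impI)
    fix k a :: nat
    assume "a \<ge> 1"
    define x where "x = exp (\<delta> / real a) / \<rho>"
    have "exp (\<delta> / real a) \<le> exp \<delta>"
      using \<open>\<delta> > 0\<close> \<open>a \<ge> 1\<close> by (simp add: divide_le_eq mult_le_cancel_left1)
    then have "0 \<le> x" "x \<le> q"
      using assms(2) by (simp_all add: x_def q_def divide_right_mono)
    have "(\<Sum>j=1..a. real (T_inf j) * x ^ j) \<le> C * \<kappa> * exp \<delta> * (\<Sum>n. real n powr (-3/2))"
      unfolding x_def using C \<open>C > 0\<close> assms(1,2) \<open>\<delta> > 0\<close>
      by (intro sum_twisted_le_suminf_powr) (auto simp: mult_ac)
    then have exponent: "(\<Sum>j=1..a. real (T_inf j) * x ^ j) / (1 - x) \<le> D"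
      unfolding D_def using \<open>x \<le> q\<close> \<open>q < 1\<close> \<open>C > 0\<close> assms(1)
      by (intro frac_le mult_nonneg_nonneg suminf_nonneg) (auto simp: summable_real_powr_iff)
    have "real (T_inf_le a (k + 1)) * x ^ k \<le> exp ((\<Sum>j=1..a. real (T_inf j) * x ^ j) / (1 - x))"
      using \<open>0 \<le> x\<close> \<open>x \<le> q\<close> \<open>q < 1\<close> by (intro T_inf_le_mult_pow_le_exp) auto
    also have "\<dots> \<le> exp D"
      using exponent by simp
    finally have bound: "real (T_inf_le a (k + 1)) * x ^ k \<le> exp D" .
    have "x ^ k * (\<rho> ^ k * exp (- \<delta> * real k / real a)) = 1"
      using assms(2) by (simp add: x_def power_divide exp_of_nat_mult[symmetric] exp_add[symmetric])
    then have "real (T_inf_le a (k + 1)) = real (T_inf_le a (k + 1)) * x ^ k * (\<rho> ^ k * exp (- \<delta> * real k / real a))"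
      by (simp add: mult.assoc)
    also have "\<dots> \<le> exp D * \<rho> ^ k * exp (- \<delta> * real k / real a)"
      using bound assms(2) by (simp add: mult.assoc mult_right_mono)
    finally show "real (T_inf_le a (k + 1)) \<le> exp D * \<rho> ^ k * exp (- \<delta> * real k / real a)" .
  qed (simp_all add: \<open>\<delta> > 0\<close>)
qed

end
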